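(* For all real numbers $a,b,c,d>0$, \[ \frac{a}{(a^3+63bcd)^{1/3}} + \frac{b}{(63acd+b^3)^{1/3}} + \frac{c}{(63abd+c^3)^{1/3}} + \frac{d}{(63abc+d^3)^{1/3}} \geq 1. \] *)

theory Defs
  imports Complex_Main
begin

end

theory Submission
  imports Defs
begin

text \<open>Each summand dominates its share \<open>a\<^sup>r / (a\<^sup>r + b\<^sup>r + c\<^sup>r + d\<^sup>r)\<close> of a partition
  of unity, for the exponent \<open>r = 21/16\<close>. Writing \<open>a = x\<^sup>1\<^sup>6, \<dots>\<close>, that bound is the polynomial
  inequality \<open>x\<^sup>1\<^sup>5 (x\<^sup>4\<^sup>8 + 63 (yzw)\<^sup>1\<^sup>6) \<le> (x\<^sup>2\<^sup>1 + y\<^sup>2\<^sup>1 + z\<^sup>2\<^sup>1 + w\<^sup>2\<^sup>1)\<^sup>3\<close>; AM-GM reduces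
  \<open>y\<^sup>2\<^sup>1 + z\<^sup>2\<^sup>1 + w\<^sup>2\<^sup>1\<close> to \<open>3 (yzw)\<^sup>7\<close>, and what is left is a weighted AM-GM inequality
  in two variables.\<close>

lemma three_mult_le_sum_cubes:
  fixes u v w :: real
  assumes "u \<ge> 0" "v \<ge> 0" "w \<ge> 0"
  shows "3*u*v*w \<le> u^3 + v^3 + w^3"
proof -
  have "u^3 + v^3 + w^3 - 3*u*v*w = (u + v + w) * ((u - v)^2 + (v - w)^2 + (w - u)^2) / 2"
    by (simp add: algebra_simps power2_eq_square power3_eq_cube)
  moreover have "(u + v + w) * ((u - v)^2 + (v - w)^2 + (w - u)^2) / 2 \<ge> 0"
    using assms by simp
  ultimately show ?thesis by linarith
qed

text \<open>AM-GM with weights \<open>1, 3, 3\<close> on \<open>X\<^sup>1\<^sup>4, X\<^sup>7q\<^sup>7, q\<^sup>1\<^sup>4\<close>, certified by a factorisation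
  with the double root \<open>X = q\<close> and a cofactor with nonnegative coefficients.\<close>

lemma weighted_amgm_14:
  fixes X q :: real
  assumes "X \<ge> 0" "q \<ge> 0"
  shows "7*X^5*q^9 \<le> X^14 + 3*X^7*q^7 + 3*q^14"
proof -
  define g where "g = X^12 + 2*X^11*q + 3*X^10*q^2 + 4*X^9*q^3 + 5*X^8*q^4 + 6*X^7*q^5
     + 7*X^6*q^6 + 11*X^5*q^7 + 15*X^4*q^8 + 12*X^3*q^9 + 9*X^2*q^10 + 6*X*q^11 + 3*q^12"
  have "X^14 + 3*X^7*q^7 + 3*q^14 - 7*X^5*q^9 = (X - q)^2 * g"
    unfolding g_def by algebra
  moreover have "(X - q)^2 * g \<ge> 0"
    unfolding g_def using assms by simp
  ultimately show ?thesis by linarith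
qed

lemma power15_mult_le_cube:
  fixes x p :: real
  assumes "x \<ge> 0" "p \<ge> 0"
  shows "x^15 * (x^48 + 63*p^16) \<le> (x^21 + 3*p^7)^3"
proof -
  have "(x^21 + 3*p^7)^3 - x^15 * (x^48 + 63*p^16)
      = 9*p^7 * ((x^3)^14 + 3*(x^3)^7*p^7 + 3*p^14 - 7*(x^3)^5*p^9)"
    by algebra
  moreover have "7*(x^3)^5*p^9 \<le> (x^3)^14 + 3*(x^3)^7*p^7 + 3*p^14"
    using weighted_amgm_14[of "x^3" p] assms by simp
  then have "9*p^7 * ((x^3)^14 + 3*(x^3)^7*p^7 + 3*p^14 - 7*(x^3)^5*p^9) \<ge> 0"
    using assms by simp
  ultimately show ?thesis by linarith
qed

lemma power15_mult_le_cube_sum21: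
  fixes x y z w :: real
  assumes "x \<ge> 0" "y \<ge> 0" "z \<ge> 0" "w \<ge> 0"
  shows "x^15 * (x^48 + 63*(y*z*w)^16) \<le> (x^21 + y^21 + z^21 + w^21)^3"
proof -
  have "3*(y*z*w)^7 \<le> y^21 + z^21 + w^21"
    using three_mult_le_sum_cubes[of "y^7" "z^7" "w^7"] assms
    by (simp add: power_mult_distrib flip: power_mult)
  have "x^15 * (x^48 + 63*(y*z*w)^16) \<le> (x^21 + 3*(y*z*w)^7)^3"
    using assms by (intro power15_mult_le_cube) auto
  also have "\<dots> \<le> (x^21 + (y^21 + z^21 + w^21))^3"
    using \<open>3*(y*z*w)^7 \<le> y^21 + z^21 + w^21\<close> assms by (intro power_mono) auto
  finally show ?thesis by (simp only: add.assoc)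
qed

lemma power_of_powr_inverse:
  fixes t :: real
  assumes "t > 0"
  shows "(t powr (1/n))^k = t powr (k/n)"
  using assms by (simp add: powr_realpow [symmetric] powr_powr)

lemma cbrt_term_ge_powr_share:
  fixes a b c d :: real
  assumes "a > 0" "b > 0" "c > 0" "d > 0"
  shows "a powr (21/16) / (a powr (21/16) + b powr (21/16) + c powr (21/16) + d powr (21/16))
     \<le> a / (a^3 + 63*b*c*d) powr (1/3)"
proof -
  define x y z w where "x = a powr (1/16)" and "y = b powr (1/16)"
    and "z = c powr (1/16)" and "w = d powr (1/16)"
  have pos: "x > 0" "y > 0" "z > 0" "w > 0"
    using assms unfolding x_def y_def z_def w_def by auto
  have sixteenth: "a = x^16" "b = y^16" "c = z^16" "d = w^16"
    using assms power_of_powr_inverse[of _ 16 16] unfolding x_def y_def z_def w_def by simp_all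
  have share: "a powr (21/16) = x^21" "b powr (21/16) = y^21"
      "c powr (21/16) = z^21" "d powr (21/16) = w^21"
    using assms power_of_powr_inverse[of _ 16 21] unfolding x_def y_def z_def w_def by simp_all
  define S D where "S = x^21 + y^21 + z^21 + w^21" and "D = a^3 + 63*b*c*d"
  have "S > 0" "D > 0"
    unfolding S_def D_def using pos assms by (auto intro!: add_pos_pos)
  have D_expand: "D = x^48 + 63*(y*z*w)^16"
    unfolding D_def sixteenth by (simp add: power_mult_distrib flip: power_mult)
  have "(x^5 * D powr (1/3))^3 = x^15 * D"
    using \<open>D > 0\<close> by (simp add: power_mult_distrib power_of_powr_inverse flip: power_mult)
  also have "\<dots> \<le> S^3"
    unfolding D_expand S_def using pos by (intro power15_mult_le_cube_sum21) auto
  finally have "x^5 * D powr (1/3) \<le> S"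
    using power_le_imp_le_base[of "x^5 * D powr (1/3)" 2 S] \<open>S > 0\<close> by simp
  then have "x^16 * (x^5 * D powr (1/3)) \<le> x^16 * S"
    using pos by (intro mult_left_mono) auto
  then have "x^21 * D powr (1/3) \<le> x^16 * S"
    by (simp add: mult.assoc [symmetric] power_add [symmetric])
  then have "x^21 / S \<le> a / D powr (1/3)"
    using \<open>S > 0\<close> \<open>D > 0\<close> sixteenth(1) by (simp add: divide_simps mult.commute)
  then show ?thesis
    unfolding share S_def D_def .
qed

theorem mainTheorem19:
  fixes a b c d :: real
  assumes "a > 0" and "b > 0" and "c > 0" and "d > 0"
  shows "a / (a^3 + 63*b*c*d) powr (1/3) + b / (63*a*c*d + b^3) powr (1/3)
       + c / (63*a*b*d + c^3) powr (1/3) + d / (63*a*b*c + d^3) powr (1/3) \<ge> 1"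
proof -
  let ?A = "a powr (21/16)" and ?B = "b powr (21/16)"
  and ?C = "c powr (21/16)" and ?D = "d powr (21/16)"
  let ?S = "?A + ?B + ?C + ?D"
  have "?S > 0" using assms by (intro add_pos_pos) auto
  then have "1 = ?A/?S + ?B/?S + ?C/?S + ?D/?S"
    by (simp add: add_divide_distrib [symmetric])
  moreover have "?A/?S \<le> a / (a^3 + 63*b*c*d) powr (1/3)"
    using cbrt_term_ge_powr_share assms by blast
  moreover have "?B/?S \<le> b / (63*a*c*d + b^3) powr (1/3)"
    using cbrt_term_ge_powr_share[of b a c d] assms by (simp only: add_ac mult_ac)
  moreover have "?C/?S \<le> c / (63*a*b*d + c^3) powr (1/3)"
    using cbrt_term_ge_powr_share[of c a b d] assms by (simp only: add_ac mult_ac)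
  moreover have "?D/?S \<le> d / (63*a*b*c + d^3) powr (1/3)"
    using cbrt_term_ge_powr_share[of d a b c] assms by (simp only: add_ac mult_ac)
  ultimately show ?thesis by linarith
qed

end
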